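(* For $\ell=0,1,\ldots,N-1$ define $$\hat{\mathcal{K}}_\ell(p,q)=\prod_{m=1}^N\prod_{n=1}^{N-\ell}\Gamma\big(1-i(p_m-q_n)/\hbar\mu\big),\qquad p\in\mathbb{C}^N,\ q\in\mathbb{C}^{N-\ell}.$$ Then for every $k\in\{1,\ldots,N-\ell\}$, as identities of meromorphic functions, $$\hat A_{k,\rm nr}(p_1,\ldots,p_N)\hat{\mathcal{K}}_\ell(p,q)=\hat A_{-k,\rm nr}(q_1,\ldots,q_{N-\ell})\hat{\mathcal{K}}_\ell(p,q).$$
   Context: Fix $\hbar,\mu>0$; $\Gamma$ is Euler's gamma function. The operator $\exp(\mp i\hbar\mu\partial_{p_m})$ acts on meromorphic $f$ by $f(p)\mapsto f(p_1,\ldots,p_m\mp i\hbar\mu,\ldots)$. For $n$ variables and $k=1,\ldots,n$, $$\hat A_{\pm k,\rm nr}(p)=(\mp i)^{k(n-k)}\sum_{I\subset\{1,\ldots,n\},|I|=k}\ \prod_{m\in I,m'\notin I}\frac{\hbar\mu}{p_m-p_{m'}}\prod_{m\in I}\exp(\mp i\hbar\mu\partial_{p_m}).$$ *)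

theory Defs
  imports "HOL-Analysis.Analysis"
begin

text \<open>Points of C^n are functions nat => complex; only coordinates 1..n are used.
  The sign s is 1 for the operator A_{+k,nr} and -1 for A_{-k,nr}.\<close>

definition shift_set :: "nat set \<Rightarrow> complex \<Rightarrow> (nat \<Rightarrow> complex) \<Rightarrow> (nat \<Rightarrow> complex)" where
  "shift_set I c p = (\<lambda>j. if j \<in> I then p j + c else p j)"

definition A_nr :: "real \<Rightarrow> real \<Rightarrow> nat \<Rightarrow> complex \<Rightarrow> nat \<Rightarrow>
    ((nat \<Rightarrow> complex) \<Rightarrow> complex) \<Rightarrow> (nat \<Rightarrow> complex) \<Rightarrow> complex" where
  "A_nr hbar mu n s k f p =
     (- s * \<i>) ^ (k * (n - k)) *
     (\<Sum>I\<in>{I. I \<subseteq> {1..n} \<and> card I = k}.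
        (\<Prod>m\<in>I. \<Prod>m'\<in>{1..n} - I. complex_of_real (hbar * mu) / (p m - p m')) *
        f (shift_set I (- s * \<i> * complex_of_real (hbar * mu)) p))"

definition K_hat :: "real \<Rightarrow> real \<Rightarrow> nat \<Rightarrow> nat \<Rightarrow> (nat \<Rightarrow> complex) \<Rightarrow> (nat \<Rightarrow> complex) \<Rightarrow> complex" where
  "K_hat hbar mu N l p q =
     (\<Prod>m\<in>{1..N}. \<Prod>n\<in>{1..N-l}.
        Gamma (1 - \<i> * (p m - q n) / complex_of_real (hbar * mu)))"

end

theory Submission
  imports Defs "HOL-Computational_Algebra.Polynomial"
begin

text \<open>Rescaled by hbar*mu, the variables p_1, ..., p_N and q_1, ..., q_(N-l) form one family w of
  distinct nodes, indexed by a set W with the p-nodes forming U. Since Gamma(x - 1) = Gamma(x)/(x - 1),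
  shifting the variables in a set I multiplies the kernel by factors 1/(w_i - w_j), and every summand
  of either operator applied to the kernel becomes the kernel times a constant depending only on k,
  times the partition weight G(I) = prod_(i in I) prod_(j in W - I) 1/(w_i - w_j), where I is a
  k-subset of U, resp. of W - U. So the theorem reduces to
  sum_(I subset U, |I| = k) G(I) = (-1)^k sum_(I subset W - U, |I| = k) G(I)  whenever 2k <= |W|.
  Let S(a, b) be the sum of G over the sets with a nodes in U and b nodes outside. Double counting gives
  (a + 1) S(a + 1, b) + (b + 1) S(a, b + 1) = sum_J sum_(i not in J) G(J + i), and each inner sum is G(J)
  times the divided difference over W of a polynomial of degree 2|J| <= |W| - 2, hence zero. Solving this
  recurrence gives S(k, 0) = (-1)^k S(0, k).\<close>

section \<open>Divided differences\<close>

definition lagrange_weight :: "'a set \<Rightarrow> ('a \<Rightarrow> 'b::field) \<Rightarrow> 'a \<Rightarrow> 'b" where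
  "lagrange_weight W w i = (\<Prod>l\<in>W - {i}. 1 / (w i - w l))"

definition divided_diff :: "'a set \<Rightarrow> ('a \<Rightarrow> 'b::field) \<Rightarrow> ('a \<Rightarrow> 'b) \<Rightarrow> 'b" where
  "divided_diff W w f = (\<Sum>i\<in>W. lagrange_weight W w i * f i)"

lemma divided_diff_add: "divided_diff W w (\<lambda>i. f i + g i) = divided_diff W w f + divided_diff W w g"
  by (simp add: divided_diff_def distrib_left sum.distrib)

lemma divided_diff_cmult: "divided_diff W w (\<lambda>i. c * f i) = c * divided_diff W w f"
  by (simp add: divided_diff_def sum_distrib_left algebra_simps)

lemma divided_diff_singleton: "divided_diff {a} w f = f a"
  by (simp add: divided_diff_def lagrange_weight_def)

lemma lagrange_weight_remove:
  assumes "finite W" "inj_on w W" "i \<in> W" "b \<in> W" "i \<noteq> b"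
  shows "lagrange_weight W w i = lagrange_weight (W - {b}) w i / (w i - w b)"
proof -
  have "W - {i} = insert b (W - {b} - {i})" using assms by auto
  then show ?thesis using assms unfolding lagrange_weight_def
    by (simp add: prod.insert field_simps)
qed

lemma divided_diff_mult_linear:
  assumes "finite W" "inj_on w W" "b \<in> W"
  shows "divided_diff W w (\<lambda>i. (w i - w b) * f i) = divided_diff (W - {b}) w f"
proof -
  have "divided_diff W w (\<lambda>i. (w i - w b) * f i)
      = (\<Sum>i\<in>W - {b}. lagrange_weight W w i * ((w i - w b) * f i))"
    unfolding divided_diff_def using assms by (simp add: sum.remove)
  also have "\<dots> = (\<Sum>i\<in>W - {b}. lagrange_weight (W - {b}) w i * f i)"
  proof (rule sum.cong)
    fix i assume i: "i \<in> W - {b}"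
    then have "w i \<noteq> w b" using assms by (auto dest: inj_onD)
    then show "lagrange_weight W w i * ((w i - w b) * f i) = lagrange_weight (W - {b}) w i * f i"
      using lagrange_weight_remove[OF assms(1,2) _ assms(3), of i] i by (simp add: field_simps)
  qed simp
  finally show ?thesis unfolding divided_diff_def .
qed

lemma divided_diff_const_eq_0:
  assumes "finite W" "inj_on w W" "2 \<le> card W"
  shows "divided_diff W w (\<lambda>_. 1) = 0"
  using assms
proof (induction "card W" arbitrary: W rule: less_induct)
  case less
  obtain a b where ab: "a \<in> W" "b \<in> W" "a \<noteq> b"
    using less.prems by (metis One_nat_def card.empty card_le_Suc0_iff_eq not_less_eq_eq
        numeral_2_eq_2 zero_less_Suc less_le_not_le)
  have "w a \<noteq> w b" using ab less.prems(2) by (auto dest: inj_onD)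
  have "divided_diff (W - {b}) w (\<lambda>_. 1) = divided_diff W w (\<lambda>i. (w a - w b) * 1 + (w i - w a) * 1)"
    using divided_diff_mult_linear[OF less.prems(1,2) ab(2), of "\<lambda>_. 1"] by (simp add: algebra_simps)
  also have "\<dots> = (w a - w b) * divided_diff W w (\<lambda>_. 1) + divided_diff (W - {a}) w (\<lambda>_. 1)"
    by (simp only: divided_diff_add divided_diff_cmult divided_diff_mult_linear[OF less.prems(1,2) ab(1)])
  finally have key: "(w a - w b) * divided_diff W w (\<lambda>_. 1)
      = divided_diff (W - {b}) w (\<lambda>_. 1) - divided_diff (W - {a}) w (\<lambda>_. 1)"
    by (simp add: algebra_simps)
  have "divided_diff (W - {b}) w (\<lambda>_. 1) = divided_diff (W - {a}) w (\<lambda>_. 1)"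
  proof (cases "card W = 2")
    case True
    then have "W = {a, b}" using ab by (metis card_2_iff doubleton_eq_iff insertE singletonD)
    then show ?thesis using ab by (simp add: insert_Diff_if divided_diff_singleton)
  next
    case False
    have "divided_diff (W - {x}) w (\<lambda>_. 1) = 0" if "x \<in> W" for x
      using less that False by (intro less.hyps) (auto intro: inj_on_subset)
    then show ?thesis using ab by simp
  qed
  with key \<open>w a \<noteq> w b\<close> show ?case by simp
qed

lemma divided_diff_poly_eq_0:
  assumes "finite W" "inj_on w W" "degree P + 2 \<le> card W"
  shows "divided_diff W w (\<lambda>i. poly P (w i)) = 0"
  using assms
proof (induction P arbitrary: W rule: pCons_induct)
  case 0
  then show ?case by (simp add: divided_diff_def)
next
  case (pCons a P)
  have const: "divided_diff W w (\<lambda>_. 1) = 0"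
    using pCons.prems by (intro divided_diff_const_eq_0) auto
  show ?case
  proof (cases "P = 0")
    case True
    then show ?thesis using divided_diff_cmult[of W w a "\<lambda>_. 1"] const by simp
  next
    case False
    then have deg: "degree (pCons a P) = Suc (degree P)" by simp
    then obtain b where b: "b \<in> W" using pCons.prems by fastforce
    have "divided_diff W w (\<lambda>i. poly (pCons a P) (w i)) =
       divided_diff W w (\<lambda>i. a * 1 + ((w i - w b) * poly P (w i) + w b * poly P (w i)))"
      by (simp add: algebra_simps)
    also have "\<dots> = a * divided_diff W w (\<lambda>_. 1) + divided_diff (W - {b}) w (\<lambda>i. poly P (w i))
        + w b * divided_diff W w (\<lambda>i. poly P (w i))"
      by (simp only: divided_diff_add divided_diff_cmult
          divided_diff_mult_linear[OF pCons.prems(1,2) b] add.assoc)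
    also have "\<dots> = 0"
      using const pCons.IH[of "W - {b}"] pCons.IH[of W] pCons.prems b deg
      by (simp add: inj_on_subset[of w W])
    finally show ?thesis .
  qed
qed

section \<open>Partition weights\<close>

definition partition_weight :: "'a set \<Rightarrow> ('a \<Rightarrow> 'b::field) \<Rightarrow> 'a set \<Rightarrow> 'b" where
  "partition_weight W w I = (\<Prod>i\<in>I. \<Prod>l\<in>W - I. 1 / (w i - w l))"

lemma partition_weight_insert:
  assumes W: "finite W" "inj_on w W" and I: "I \<subseteq> W" and i: "i \<in> W - I"
  shows "partition_weight W w (insert i I)
       = partition_weight W w I * lagrange_weight W w i * (\<Prod>l\<in>I. (w l - w i) * (w i - w l))"
proof -
  define R where "R = W - insert i I"
  have fin: "finite I" "finite R" using W I finite_subset unfolding R_def by auto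
  have ne: "w l - w i \<noteq> 0" "w i - w l \<noteq> 0" if "l \<in> I" for l
    using W I i that by (auto dest: inj_onD)
  have cancel: "(\<Prod>l\<in>I. 1 / (w l - w i)) * (\<Prod>l\<in>I. 1 / (w i - w l)) * (\<Prod>l\<in>I. (w l - w i) * (w i - w l)) = 1"
    unfolding prod.distrib[symmetric] by (rule prod.neutral) (use ne in simp)
  have "W - I = insert i R" "i \<notin> R" using i unfolding R_def by auto
  then have old: "partition_weight W w I
      = (\<Prod>l\<in>I. 1 / (w l - w i)) * (\<Prod>j\<in>I. \<Prod>l\<in>R. 1 / (w j - w l))"
    unfolding partition_weight_def prod.distrib[symmetric] using fin by simp
  have "W - {i} = I \<union> R" "I \<inter> R = {}" using i I unfolding R_def by auto
  then have lagrange: "lagrange_weight W w i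
      = (\<Prod>l\<in>I. 1 / (w i - w l)) * (\<Prod>l\<in>R. 1 / (w i - w l))"
    unfolding lagrange_weight_def using fin by (simp add: prod.union_disjoint)
  have new: "partition_weight W w (insert i I)
      = (\<Prod>l\<in>R. 1 / (w i - w l)) * (\<Prod>j\<in>I. \<Prod>l\<in>R. 1 / (w j - w l))"
    unfolding partition_weight_def R_def[symmetric] using fin i by simp
  show ?thesis
    unfolding new old lagrange using cancel by (simp add: algebra_simps)
qed

text \<open>By \<open>partition_weight_insert\<close> the sum is a divided difference of a polynomial of
  degree \<open>2 * card I\<close>.\<close>
lemma sum_partition_weight_insert_eq_0:
  assumes W: "finite W" "inj_on w W" and I: "I \<subseteq> W" and card: "2 * card I + 2 \<le> card W"
  shows "(\<Sum>i\<in>W - I. partition_weight W w (insert i I)) = 0"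
proof -
  define P where "P = (\<Prod>l\<in>I. [:w l, -1:] * [:- w l, 1:])"
  have fin: "finite I" using W I finite_subset by blast
  have poly_P: "poly P x = (\<Prod>l\<in>I. (w l - x) * (x - w l))" for x
    unfolding P_def poly_prod by (rule prod.cong) (auto simp: algebra_simps)
  have "degree P \<le> (\<Sum>l\<in>I. degree ([:w l, -1:] * [:- w l, 1:]))"
    unfolding P_def by (rule order.trans[OF degree_prod_sum_le[OF fin]]) (simp only: o_def order.refl)
  also have "\<dots> \<le> (\<Sum>l\<in>I. 2)"
    by (intro sum_mono order.trans[OF degree_mult_le]) simp
  finally have deg: "degree P + 2 \<le> card W" using card by simp
  have "(\<Sum>i\<in>W - I. partition_weight W w (insert i I))
      = (\<Sum>i\<in>W - I. partition_weight W w I * (lagrange_weight W w i * poly P (w i)))"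
    by (rule sum.cong[OF refl]) (simp add: partition_weight_insert[OF W I] poly_P)
  also have "\<dots> = (\<Sum>i\<in>W. partition_weight W w I * (lagrange_weight W w i * poly P (w i)))"
    by (rule sum.mono_neutral_left) (use W I fin in \<open>auto simp: poly_P\<close>)
  also have "\<dots> = partition_weight W w I * divided_diff W w (\<lambda>i. poly P (w i))"
    by (simp add: divided_diff_def sum_distrib_left)
  also have "\<dots> = 0" using divided_diff_poly_eq_0[OF W deg] by simp
  finally show ?thesis .
qed

definition split_subsets :: "'a set \<Rightarrow> 'a set \<Rightarrow> nat \<Rightarrow> nat \<Rightarrow> 'a set set" where
  "split_subsets W U a b = {I. I \<subseteq> W \<and> card (I \<inter> U) = a \<and> card (I - U) = b}"

definition split_sum :: "'a set \<Rightarrow> ('a \<Rightarrow> 'b::field) \<Rightarrow> 'a set \<Rightarrow> nat \<Rightarrow> nat \<Rightarrow> 'b" where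
  "split_sum W w U a b = (\<Sum>I\<in>split_subsets W U a b. partition_weight W w I)"

lemma finite_split_subsets: "finite W \<Longrightarrow> finite (split_subsets W U a b)"
  by (rule finite_subset[of _ "Pow W"]) (auto simp: split_subsets_def)

lemma split_subsets_swap: "split_subsets W (W - U) b a = split_subsets W U a b"
proof -
  have "I \<inter> (W - U) = I - U" "I - (W - U) = I \<inter> U" if "I \<subseteq> W" for I
    using that by auto
  then show ?thesis unfolding split_subsets_def by auto
qed

lemma split_subsets_zero:
  assumes "finite W" "U \<subseteq> W"
  shows "split_subsets W U k 0 = {I. I \<subseteq> U \<and> card I = k}"
proof -
  have "card (I - U) = 0 \<longleftrightarrow> I \<subseteq> U" if "I \<subseteq> W" for I
    using that assms(1) finite_subset[of I W] by (metis Diff_eq_empty_iff card_0_eq finite_Diff)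
  then show ?thesis
    using assms(2) unfolding split_subsets_def by (auto simp: Int_absorb2)
qed

lemma split_subsets_remove:
  assumes "finite W" "I \<in> split_subsets W X (Suc a) b" "i \<in> I \<inter> X"
  shows "I - {i} \<in> split_subsets W X a b"
proof -
  have "finite I" using assms(1,2) finite_subset unfolding split_subsets_def by blast
  moreover have "(I - {i}) \<inter> X = I \<inter> X - {i}" "I - {i} - X = I - X" using assms(3) by auto
  ultimately show ?thesis using assms(2,3) unfolding split_subsets_def by auto
qed

lemma split_subsets_insert:
  assumes "finite W" "X \<subseteq> W" "J \<in> split_subsets W X a b" "i \<in> X - J"
  shows "insert i J \<in> split_subsets W X (Suc a) b"
proof -
  have "finite J" using assms(1,3) finite_subset unfolding split_subsets_def by blast
  moreover have "insert i J \<inter> X = insert i (J \<inter> X)" "insert i J - X = J - X" using assms(4) by auto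
  ultimately show ?thesis using assms(2-4) unfolding split_subsets_def by auto
qed

lemma sum_split_subsets_Suc:
  fixes G :: "'a set \<Rightarrow> 'b::comm_semiring_1"
  assumes W: "finite W" and X: "X \<subseteq> W"
  shows "(\<Sum>I\<in>split_subsets W X (Suc a) b. of_nat (Suc a) * G I)
       = (\<Sum>J\<in>split_subsets W X a b. \<Sum>i\<in>X - J. G (insert i J))"
proof -
  have fin: "finite I" if "I \<in> split_subsets W X c d" for I c d
    using that W finite_subset unfolding split_subsets_def by blast
  have "(\<Sum>I\<in>split_subsets W X (Suc a) b. of_nat (Suc a) * G I)
      = (\<Sum>I\<in>split_subsets W X (Suc a) b. \<Sum>i\<in>I \<inter> X. G I)"
    by (rule sum.cong) (auto simp: split_subsets_def)
  also have "\<dots> = (\<Sum>(I, i)\<in>Sigma (split_subsets W X (Suc a) b) (\<lambda>I. I \<inter> X). G I)"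
    by (rule sum.Sigma) (use W fin finite_split_subsets in auto)
  also have "\<dots> = (\<Sum>(J, i)\<in>Sigma (split_subsets W X a b) (\<lambda>J. X - J). G (insert i J))"
    by (rule sum.reindex_bij_witness[where i="\<lambda>(J, i). (insert i J, i)" and j="\<lambda>(I, i). (I - {i}, i)"])
      (auto simp: insert_absorb split_subsets_remove[OF W] split_subsets_insert[OF W X])
  also have "\<dots> = (\<Sum>J\<in>split_subsets W X a b. \<Sum>i\<in>X - J. G (insert i J))"
    by (rule sum.Sigma[symmetric]) (use W X finite_split_subsets in \<open>auto intro: finite_subset\<close>)
  finally show ?thesis .
qed

lemma split_sum_recurrence:
  fixes w :: "'a \<Rightarrow> 'b::field"
  assumes W: "finite W" "inj_on w W" and U: "U \<subseteq> W" and card: "2 * (a + b) + 2 \<le> card W"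
  shows "of_nat (Suc a) * split_sum W w U (Suc a) b + of_nat (Suc b) * split_sum W w U a (Suc b) = 0"
proof -
  let ?G = "\<lambda>J i. partition_weight W w (insert i J)"
  have "of_nat (Suc a) * split_sum W w U (Suc a) b = (\<Sum>J\<in>split_subsets W U a b. \<Sum>i\<in>U - J. ?G J i)"
    using sum_split_subsets_Suc[OF W(1) U, where a=a and b=b and G="partition_weight W w"]
    by (simp add: split_sum_def sum_distrib_left)
  moreover have "of_nat (Suc b) * split_sum W w U a (Suc b)
      = (\<Sum>J\<in>split_subsets W U a b. \<Sum>i\<in>(W - U) - J. ?G J i)"
    using sum_split_subsets_Suc[OF W(1), where X="W - U" and a=b and b=a and G="partition_weight W w"]
    by (simp add: split_sum_def sum_distrib_left split_subsets_swap)
  moreover have "(\<Sum>i\<in>U - J. ?G J i) + (\<Sum>i\<in>(W - U) - J. ?G J i) = 0"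
    if J: "J \<in> split_subsets W U a b" for J
  proof -
    have JW: "J \<subseteq> W" "finite J" using J W by (auto simp: split_subsets_def intro: finite_subset)
    then have "card J = a + b" using J card_Int_Diff[of J U] by (simp add: split_subsets_def)
    have "(\<Sum>i\<in>U - J. ?G J i) + (\<Sum>i\<in>(W - U) - J. ?G J i) = (\<Sum>i\<in>(U - J) \<union> ((W - U) - J). ?G J i)"
      by (rule sum.union_disjoint[symmetric]) (use W U in \<open>auto intro: finite_subset\<close>)
    also have "(U - J) \<union> ((W - U) - J) = W - J" using U by auto
    finally show ?thesis
      using sum_partition_weight_insert_eq_0[OF W JW(1)] card \<open>card J = a + b\<close> by simp
  qed
  ultimately show ?thesis by (simp add: sum.distrib[symmetric])
qed

lemma split_sum_closed_form:
  fixes w :: "'a \<Rightarrow> 'b::field_char_0"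
  assumes W: "finite W" "inj_on w W" and U: "U \<subseteq> W" and card: "2 * k \<le> card W" and "a \<le> k"
  shows "split_sum W w U a (k - a) = (-1) ^ a * of_nat (k choose a) * split_sum W w U 0 k"
  using \<open>a \<le> k\<close>
proof (induction a)
  case 0
  then show ?case by simp
next
  case (Suc a)
  define b where "b = k - Suc a"
  have k: "k = Suc (a + b)" using Suc.prems b_def by simp
  have IH: "split_sum W w U a (Suc b) = (-1) ^ a * of_nat (k choose a) * split_sum W w U 0 k"
    using Suc k by (simp add: Suc_diff_le)
  have binomial: "of_nat (Suc a) * of_nat (k choose Suc a) = (of_nat (Suc b) * of_nat (k choose a) :: 'b)"
    unfolding of_nat_mult[symmetric] k by (rule arg_cong[where f=of_nat], rule Suc_times_binomial_add)
  have "of_nat (Suc a) * split_sum W w U (Suc a) b = - (of_nat (Suc b) * split_sum W w U a (Suc b))"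
    using split_sum_recurrence[OF W U, of a b] card k by (simp add: eq_neg_iff_add_eq_0)
  also have "\<dots> = - ((of_nat (Suc b) * of_nat (k choose a)) * ((-1) ^ a * split_sum W w U 0 k))"
    unfolding IH by (simp only: mult_ac)
  also have "\<dots> = of_nat (Suc a) * ((-1) ^ Suc a * of_nat (k choose Suc a) * split_sum W w U 0 k)"
    unfolding binomial[symmetric] by simp
  finally show ?case
    unfolding b_def[symmetric] by (rule mult_left_cancel[THEN iffD1, OF of_nat_neq_0])
qed

theorem sum_partition_weight_complement:
  fixes w :: "'a \<Rightarrow> 'b::field_char_0"
  assumes W: "finite W" "inj_on w W" and U: "U \<subseteq> W" and card: "2 * k \<le> card W"
  shows "(\<Sum>I\<in>{I. I \<subseteq> U \<and> card I = k}. partition_weight W w I)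
       = (-1) ^ k * (\<Sum>I\<in>{I. I \<subseteq> W - U \<and> card I = k}. partition_weight W w I)"
proof -
  have "split_subsets W U 0 k = {I. I \<subseteq> W - U \<and> card I = k}"
    using split_subsets_zero[OF W(1), of "W - U" k] split_subsets_swap[of W U k 0] by simp
  then show ?thesis
    using split_sum_closed_form[OF W U card, of k] split_subsets_zero[OF W(1) U]
    by (simp add: split_sum_def)
qed

section \<open>Shifting the Gamma kernel\<close>

lemma Gamma_kernel_factor_shift:
  fixes c d :: complex
  assumes "c \<noteq> 0" and "1 - \<i> * d / c \<notin> \<int>"
  shows "Gamma (1 - \<i> * (d - \<i> * c) / c) = Gamma (1 - \<i> * d / c) * (\<i> * c / d)"
proof -
  define z where "z = - \<i> * d / c"
  have "z + 1 \<notin> \<int>" using assms(2) unfolding z_def by (simp add: algebra_simps)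
  then have z: "z \<notin> \<int>\<^sub>\<le>\<^sub>0" "z \<noteq> 0"
    using nonpos_Ints_subset_Ints by (auto intro: Ints_add)
  have eqs: "1 - \<i> * (d - \<i> * c) / c = z" "1 - \<i> * d / c = z + 1" "\<i> * c / d = 1 / z"
    using assms(1) z(2) unfolding z_def by (auto simp: field_simps)
  show ?thesis unfolding eqs Gamma_plus1[OF z(1)] using z(2) by simp
qed

lemma K_hat_shift:
  fixes hbar mu :: real
  defines "c \<equiv> complex_of_real (hbar * mu)"
  assumes "hbar * mu \<noteq> 0"
    and nonint: "\<And>m n. m \<in> {1..N} \<Longrightarrow> n \<in> {1..N - l} \<Longrightarrow> 1 - \<i> * (p m - q n) / c \<notin> \<int>"
    and shift: "\<And>m n. m \<in> {1..N} \<Longrightarrow> n \<in> {1..N - l} \<Longrightarrow>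
       p' m - q' n = p m - q n - (if S m n then \<i> * c else 0)"
  shows "K_hat hbar mu N l p' q'
       = K_hat hbar mu N l p q * (\<Prod>m\<in>{1..N}. \<Prod>n\<in>{1..N - l}. if S m n then \<i> * c / (p m - q n) else 1)"
proof -
  have "c \<noteq> 0" using assms(2) unfolding c_def by simp
  have "Gamma (1 - \<i> * (p' m - q' n) / c)
      = Gamma (1 - \<i> * (p m - q n) / c) * (if S m n then \<i> * c / (p m - q n) else 1)"
    if "m \<in> {1..N}" "n \<in> {1..N - l}" for m n
    using Gamma_kernel_factor_shift[OF \<open>c \<noteq> 0\<close> nonint[OF that]] shift[OF that] by simp
  then show ?thesis
    unfolding K_hat_def c_def[symmetric] prod.distrib[symmetric] by (intro prod.cong refl) auto
qed

lemma K_hat_shift_p: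
  fixes hbar mu :: real
  defines "c \<equiv> complex_of_real (hbar * mu)"
  assumes "hbar * mu \<noteq> 0" and I: "I \<subseteq> {1..N}"
    and nonint: "\<And>m n. m \<in> {1..N} \<Longrightarrow> n \<in> {1..N - l} \<Longrightarrow> 1 - \<i> * (p m - q n) / c \<notin> \<int>"
  shows "K_hat hbar mu N l (shift_set I (- \<i> * c) p) q
       = K_hat hbar mu N l p q * (\<Prod>m\<in>I. \<Prod>n\<in>{1..N - l}. \<i> * c / (p m - q n))"
proof -
  have "K_hat hbar mu N l (shift_set I (- \<i> * c) p) q
      = K_hat hbar mu N l p q * (\<Prod>m\<in>{1..N}. \<Prod>n\<in>{1..N - l}. if m \<in> I then \<i> * c / (p m - q n) else 1)"
    unfolding c_def by (rule K_hat_shift[OF assms(2) nonint[unfolded c_def]]) (auto simp: shift_set_def)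
  also have "(\<Prod>m\<in>{1..N}. \<Prod>n\<in>{1..N - l}. if m \<in> I then \<i> * c / (p m - q n) else 1)
      = (\<Prod>m\<in>{1..N}. if m \<in> I then \<Prod>n\<in>{1..N - l}. \<i> * c / (p m - q n) else 1)"
    by (intro prod.cong) auto
  also have "\<dots> = (\<Prod>m\<in>I. \<Prod>n\<in>{1..N - l}. \<i> * c / (p m - q n))"
    by (simp only: prod.inter_restrict[OF finite_atLeastAtMost, symmetric] Int_absorb1[OF I])
  finally show ?thesis .
qed

lemma K_hat_shift_q:
  fixes hbar mu :: real
  defines "c \<equiv> complex_of_real (hbar * mu)"
  assumes "hbar * mu \<noteq> 0" and J: "J \<subseteq> {1..N - l}"
    and nonint: "\<And>m n. m \<in> {1..N} \<Longrightarrow> n \<in> {1..N - l} \<Longrightarrow> 1 - \<i> * (p m - q n) / c \<notin> \<int>"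
  shows "K_hat hbar mu N l p (shift_set J (\<i> * c) q)
       = K_hat hbar mu N l p q * (\<Prod>n\<in>J. \<Prod>m\<in>{1..N}. \<i> * c / (p m - q n))"
proof -
  have "K_hat hbar mu N l p (shift_set J (\<i> * c) q)
      = K_hat hbar mu N l p q * (\<Prod>m\<in>{1..N}. \<Prod>n\<in>{1..N - l}. if n \<in> J then \<i> * c / (p m - q n) else 1)"
    unfolding c_def by (rule K_hat_shift[OF assms(2) nonint[unfolded c_def]]) (auto simp: shift_set_def)
  also have "(\<Prod>m\<in>{1..N}. \<Prod>n\<in>{1..N - l}. if n \<in> J then \<i> * c / (p m - q n) else 1)
      = (\<Prod>m\<in>{1..N}. \<Prod>n\<in>J. \<i> * c / (p m - q n))"
    by (simp only: prod.inter_restrict[OF finite_atLeastAtMost, symmetric] Int_absorb1[OF J])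
  also have "\<dots> = (\<Prod>n\<in>J. \<Prod>m\<in>{1..N}. \<i> * c / (p m - q n))"
    by (rule prod.swap)
  finally show ?thesis .
qed

section \<open>The operators in terms of partition weights\<close>

lemma prod_prod_const_mult:
  fixes a :: "'a::comm_monoid_mult"
  shows "(\<Prod>x\<in>A. \<Prod>y\<in>B. a * f x y) = a ^ (card A * card B) * (\<Prod>x\<in>A. \<Prod>y\<in>B. f x y)"
  by (simp add: prod.distrib power_mult mult.commute[of "card A"])

lemma partition_weight_split:
  assumes "finite W" "I \<subseteq> U" "U \<subseteq> W"
  shows "partition_weight W w I
       = (\<Prod>i\<in>I. \<Prod>l\<in>U - I. 1 / (w i - w l)) * (\<Prod>i\<in>I. \<Prod>l\<in>W - U. 1 / (w i - w l))"
proof -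
  have "W - I = (U - I) \<union> (W - U)" "(U - I) \<inter> (W - U) = {}" using assms by auto
  moreover have "finite (U - I)" "finite (W - U)" using assms by (auto intro: finite_subset)
  ultimately have "prod g (W - I) = prod g (U - I) * prod g (W - U)" for g :: "'a \<Rightarrow> 'b"
    by (simp add: prod.union_disjoint)
  then show ?thesis unfolding partition_weight_def prod.distrib[symmetric] by simp
qed

definition joint_nodes :: "(nat \<Rightarrow> complex) \<Rightarrow> (nat \<Rightarrow> complex) \<Rightarrow> complex \<Rightarrow> nat + nat \<Rightarrow> complex" where
  "joint_nodes p q c = case_sum (\<lambda>m. p m / c) (\<lambda>n. q n / c)"

lemma inj_on_joint_nodes:
  assumes "c \<noteq> 0" "inj_on p A" "inj_on q B" "\<And>m n. m \<in> A \<Longrightarrow> n \<in> B \<Longrightarrow> p m \<noteq> q n"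
  shows "inj_on (joint_nodes p q c) (Inl ` A \<union> Inr ` B)"
proof -
  have "inj_on (joint_nodes p q c) (Inl ` A)" "inj_on (joint_nodes p q c) (Inr ` B)"
    using assms(1-3) by (auto simp: inj_on_def joint_nodes_def)
  moreover have "joint_nodes p q c ` Inl ` A \<inter> joint_nodes p q c ` Inr ` B = {}"
    using assms(1,4) by (auto simp: joint_nodes_def)
  ultimately show ?thesis by (auto simp: inj_on_Un)
qed

lemma inverse_diff_scaled: "c \<noteq> 0 \<Longrightarrow> 1 / (a / c - b / c) = c / (a - b)"
  for a b c :: "'a::field"
  by (simp add: diff_divide_distrib[symmetric])

lemma A_nr_summand_p:
  fixes hbar mu :: real and N l :: nat
  defines "c \<equiv> complex_of_real (hbar * mu)" and "W \<equiv> Inl ` {1..N} \<union> Inr ` {1..N - l}"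
  assumes "hbar * mu \<noteq> 0" and I: "I \<subseteq> {1..N}" "card I = k"
    and nonint: "\<And>m n. m \<in> {1..N} \<Longrightarrow> n \<in> {1..N - l} \<Longrightarrow> 1 - \<i> * (p m - q n) / c \<notin> \<int>"
  shows "(\<Prod>m\<in>I. \<Prod>m'\<in>{1..N} - I. c / (p m - p m')) * K_hat hbar mu N l (shift_set I (- 1 * \<i> * c) p) q
       = \<i> ^ (k * (N - l)) * K_hat hbar mu N l p q * partition_weight W (joint_nodes p q c) (Inl ` I)"
proof -
  have "c \<noteq> 0" using assms(3) unfolding c_def by simp
  have split: "partition_weight W w (Inl ` I)
      = (\<Prod>x\<in>Inl ` I. \<Prod>y\<in>Inl ` {1..N} - Inl ` I. 1 / (w x - w y))
        * (\<Prod>x\<in>Inl ` I. \<Prod>y\<in>W - Inl ` {1..N}. 1 / (w x - w y))" for w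
    by (rule partition_weight_split) (use I(1) in \<open>auto simp: W_def\<close>)
  have sets: "Inl ` {1..N} - Inl ` I = Inl ` ({1..N} - I)" "W - Inl ` {1..N} = Inr ` {1..N - l}"
    unfolding W_def by auto
  have weight: "partition_weight W (joint_nodes p q c) (Inl ` I)
      = (\<Prod>m\<in>I. \<Prod>m'\<in>{1..N} - I. c / (p m - p m')) * (\<Prod>m\<in>I. \<Prod>n\<in>{1..N - l}. c / (p m - q n))"
    unfolding split sets by (simp add: prod.reindex joint_nodes_def inverse_diff_scaled[OF \<open>c \<noteq> 0\<close>])
  have shift: "K_hat hbar mu N l (shift_set I (- 1 * \<i> * c) p) q
      = K_hat hbar mu N l p q * (\<Prod>m\<in>I. \<Prod>n\<in>{1..N - l}. \<i> * c / (p m - q n))"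
    using K_hat_shift_p[of hbar mu I N l p q] assms(3) I(1) nonint unfolding c_def by simp
  have scale: "(\<Prod>m\<in>I. \<Prod>n\<in>{1..N - l}. \<i> * c / (p m - q n))
      = \<i> ^ (k * (N - l)) * (\<Prod>m\<in>I. \<Prod>n\<in>{1..N - l}. c / (p m - q n))"
    using prod_prod_const_mult[where A=I and B="{1..N - l}" and f="\<lambda>m n. c / (p m - q n)"] I(2) by simp
  show ?thesis unfolding shift scale weight by (simp only: mult_ac)
qed

lemma A_nr_summand_q:
  fixes hbar mu :: real and N l :: nat
  defines "c \<equiv> complex_of_real (hbar * mu)" and "W \<equiv> Inl ` {1..N} \<union> Inr ` {1..N - l}"
  assumes "hbar * mu \<noteq> 0" and J: "J \<subseteq> {1..N - l}" "card J = k"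
    and nonint: "\<And>m n. m \<in> {1..N} \<Longrightarrow> n \<in> {1..N - l} \<Longrightarrow> 1 - \<i> * (p m - q n) / c \<notin> \<int>"
  shows "(\<Prod>n\<in>J. \<Prod>n'\<in>{1..N - l} - J. c / (q n - q n')) * K_hat hbar mu N l p (shift_set J (- (- 1) * \<i> * c) q)
       = (- \<i>) ^ (k * N) * K_hat hbar mu N l p q * partition_weight W (joint_nodes p q c) (Inr ` J)"
proof -
  have "c \<noteq> 0" using assms(3) unfolding c_def by simp
  have split: "partition_weight W w (Inr ` J)
      = (\<Prod>x\<in>Inr ` J. \<Prod>y\<in>Inr ` {1..N - l} - Inr ` J. 1 / (w x - w y))
        * (\<Prod>x\<in>Inr ` J. \<Prod>y\<in>W - Inr ` {1..N - l}. 1 / (w x - w y))" for w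
    by (rule partition_weight_split) (use J(1) in \<open>auto simp: W_def\<close>)
  have sets: "Inr ` {1..N - l} - Inr ` J = Inr ` ({1..N - l} - J)" "W - Inr ` {1..N - l} = Inl ` {1..N}"
    unfolding W_def by auto
  have weight: "partition_weight W (joint_nodes p q c) (Inr ` J)
      = (\<Prod>n\<in>J. \<Prod>n'\<in>{1..N - l} - J. c / (q n - q n')) * (\<Prod>n\<in>J. \<Prod>m\<in>{1..N}. c / (q n - p m))"
    unfolding split sets by (simp add: prod.reindex joint_nodes_def inverse_diff_scaled[OF \<open>c \<noteq> 0\<close>])
  have "(\<Prod>n\<in>J. \<Prod>m\<in>{1..N}. \<i> * c / (p m - q n))
      = (\<Prod>n\<in>J. \<Prod>m\<in>{1..N}. - \<i> * (c / (q n - p m)))"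
    by (intro prod.cong refl) (metis minus_diff_eq minus_divide_right mult_minus_left times_divide_eq_right)
  also have "\<dots> = (- \<i>) ^ (card J * card {1..N}) * (\<Prod>n\<in>J. \<Prod>m\<in>{1..N}. c / (q n - p m))"
    by (rule prod_prod_const_mult)
  finally have scale: "(\<Prod>n\<in>J. \<Prod>m\<in>{1..N}. \<i> * c / (p m - q n))
      = (- \<i>) ^ (k * N) * (\<Prod>n\<in>J. \<Prod>m\<in>{1..N}. c / (q n - p m))"
    using J(2) by simp
  have shift: "K_hat hbar mu N l p (shift_set J (- (- 1) * \<i> * c) q)
      = K_hat hbar mu N l p q * (\<Prod>n\<in>J. \<Prod>m\<in>{1..N}. \<i> * c / (p m - q n))"
    using K_hat_shift_q[of hbar mu J N l p q] assms(3) J(1) nonint unfolding c_def by simp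
  show ?thesis unfolding shift scale weight by (simp only: mult_ac)
qed

lemma sum_card_subsets_image:
  assumes "inj_on f A"
  shows "(\<Sum>I\<in>{I. I \<subseteq> f ` A \<and> card I = k}. g I) = (\<Sum>I\<in>{I. I \<subseteq> A \<and> card I = k}. g (f ` I))"
proof (rule sum.reindex_bij_witness[where i="image f" and j="\<lambda>I. A \<inter> f -` I"])
  fix I assume I: "I \<in> {I. I \<subseteq> f ` A \<and> card I = k}"
  then show im: "f ` (A \<inter> f -` I) = I" by blast
  have "inj_on f (A \<inter> f -` I)" using assms by (rule inj_on_subset) blast
  then have "card (A \<inter> f -` I) = card (f ` (A \<inter> f -` I))" by (simp add: card_image)
  then show "A \<inter> f -` I \<in> {I. I \<subseteq> A \<and> card I = k}" using I im by simp
  show "g (f ` (A \<inter> f -` I)) = g I" using im by simp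
next
  fix J assume J: "J \<in> {I. I \<subseteq> A \<and> card I = k}"
  then show "A \<inter> f -` f ` J = J" using assms by (auto dest: inj_onD)
  show "f ` J \<in> {I. I \<subseteq> f ` A \<and> card I = k}"
    using J inj_on_subset[OF assms] by (auto simp: card_image)
qed

lemma imag_unit_power_sign:
  assumes "k \<le> N" "k \<le> M"
  shows "(- \<i>) ^ (k * (N - k)) * \<i> ^ (k * M) * (-1) ^ k = \<i> ^ (k * (M - k)) * (- \<i>) ^ (k * N)"
proof -
  obtain a b where "N = k + a" "M = k + b" using assms le_Suc_ex by blast
  moreover have "(-1 :: complex) ^ (k * k) = (-1) ^ k"
    by (cases "even k") (simp_all add: power_mult)
  then have "(- \<i>) ^ (k * k) = (-1) ^ k * \<i> ^ (k * k)"
    by (simp add: power_minus[of \<i>])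
  ultimately show ?thesis
    by (simp add: distrib_left power_add ac_simps)
qed

lemma A_nr_K_hat_p:
  fixes hbar mu :: real and N l :: nat
  defines "c \<equiv> complex_of_real (hbar * mu)" and "W \<equiv> Inl ` {1..N} \<union> Inr ` {1..N - l}"
  assumes hm: "hbar * mu \<noteq> 0"
    and nonint: "\<And>m n. m \<in> {1..N} \<Longrightarrow> n \<in> {1..N - l} \<Longrightarrow> 1 - \<i> * (p m - q n) / c \<notin> \<int>"
  shows "A_nr hbar mu N 1 k (\<lambda>p'. K_hat hbar mu N l p' q) p
       = (- \<i>) ^ (k * (N - k)) * \<i> ^ (k * (N - l)) * K_hat hbar mu N l p q
         * (\<Sum>I\<in>{I. I \<subseteq> Inl ` {1..N} \<and> card I = k}. partition_weight W (joint_nodes p q c) I)"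
proof -
  have "A_nr hbar mu N 1 k (\<lambda>p'. K_hat hbar mu N l p' q) p
      = (- 1 * \<i>) ^ (k * (N - k)) * (\<Sum>I\<in>{I. I \<subseteq> {1..N} \<and> card I = k}.
          \<i> ^ (k * (N - l)) * K_hat hbar mu N l p q * partition_weight W (joint_nodes p q c) (Inl ` I))"
    unfolding A_nr_def W_def c_def
    by (rule arg_cong2[where f="(*)", OF refl sum.cong[OF refl]])
      (elim CollectE conjE, rule A_nr_summand_p[OF hm _ _ nonint[unfolded c_def]], assumption+)
  then show ?thesis
    unfolding mult_minus1 sum_card_subsets_image[OF inj_Inl] sum_distrib_left by (simp only: mult_ac)
qed

lemma A_nr_K_hat_q:
  fixes hbar mu :: real and N l :: nat
  defines "c \<equiv> complex_of_real (hbar * mu)" and "W \<equiv> Inl ` {1..N} \<union> Inr ` {1..N - l}"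
  assumes hm: "hbar * mu \<noteq> 0"
    and nonint: "\<And>m n. m \<in> {1..N} \<Longrightarrow> n \<in> {1..N - l} \<Longrightarrow> 1 - \<i> * (p m - q n) / c \<notin> \<int>"
  shows "A_nr hbar mu (N - l) (-1) k (\<lambda>q'. K_hat hbar mu N l p q') q
       = \<i> ^ (k * (N - l - k)) * (- \<i>) ^ (k * N) * K_hat hbar mu N l p q
         * (\<Sum>I\<in>{I. I \<subseteq> Inr ` {1..N - l} \<and> card I = k}. partition_weight W (joint_nodes p q c) I)"
proof -
  have "A_nr hbar mu (N - l) (-1) k (\<lambda>q'. K_hat hbar mu N l p q') q
      = (- (- 1) * \<i>) ^ (k * (N - l - k)) * (\<Sum>J\<in>{J. J \<subseteq> {1..N - l} \<and> card J = k}.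
          (- \<i>) ^ (k * N) * K_hat hbar mu N l p q * partition_weight W (joint_nodes p q c) (Inr ` J))"
    unfolding A_nr_def W_def c_def
    by (rule arg_cong2[where f="(*)", OF refl sum.cong[OF refl]])
      (elim CollectE conjE, rule A_nr_summand_q[OF hm _ _ nonint[unfolded c_def]], assumption+)
  then show ?thesis
    unfolding minus_minus mult_minus1 mult_1 sum_card_subsets_image[OF inj_Inr] sum_distrib_left
    by (simp only: mult_ac)
qed

theorem theorem4p12:
  fixes hbar mu :: real and N l k :: nat and p q :: "nat \<Rightarrow> complex"
  assumes "hbar > 0" and "mu > 0" and "l < N"
    and "1 \<le> k" and "k \<le> N - l"
    and "inj_on p {1..N}" and "inj_on q {1..N - l}"
    and "\<And>m n. m \<in> {1..N} \<Longrightarrow> n \<in> {1..N - l} \<Longrightarrow>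
           1 - \<i> * (p m - q n) / complex_of_real (hbar * mu) \<notin> \<int>"
  shows "A_nr hbar mu N 1 k (\<lambda>p'. K_hat hbar mu N l p' q) p
       = A_nr hbar mu (N - l) (-1) k (\<lambda>q'. K_hat hbar mu N l p q') q"
proof -
  define W where "W = Inl ` {1..N} \<union> Inr ` {1..N - l}"
  define w where "w = joint_nodes p q (complex_of_real (hbar * mu))"
  have hm: "hbar * mu \<noteq> 0" using assms(1,2) by simp
  have "p m \<noteq> q n" if "m \<in> {1..N}" "n \<in> {1..N - l}" for m n
    using assms(8)[OF that] by auto
  then have inj: "inj_on w W"
    unfolding w_def W_def using hm assms(6,7) by (intro inj_on_joint_nodes) simp_all
  have card: "2 * k \<le> card W"
    using assms(3,5) unfolding W_def by (subst card_Un_disjoint) (auto simp: card_image)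
  have W: "finite W" "Inl ` {1..N} \<subseteq> W" "W - Inl ` {1..N} = Inr ` {1..N - l}"
    unfolding W_def by auto
  have sign: "(- \<i>) ^ (k * (N - k)) * \<i> ^ (k * (N - l)) * (-1) ^ k = \<i> ^ (k * (N - l - k)) * (- \<i>) ^ (k * N)"
    using assms(5) by (intro imag_unit_power_sign) auto
  have "A_nr hbar mu N 1 k (\<lambda>p'. K_hat hbar mu N l p' q) p
      = (- \<i>) ^ (k * (N - k)) * \<i> ^ (k * (N - l)) * K_hat hbar mu N l p q
        * (\<Sum>I\<in>{I. I \<subseteq> Inl ` {1..N} \<and> card I = k}. partition_weight W w I)"
    unfolding W_def w_def by (rule A_nr_K_hat_p[OF hm assms(8)])
  also have "\<dots> = ((- \<i>) ^ (k * (N - k)) * \<i> ^ (k * (N - l)) * (-1) ^ k) * K_hat hbar mu N l p q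
        * (\<Sum>I\<in>{I. I \<subseteq> Inr ` {1..N - l} \<and> card I = k}. partition_weight W w I)"
    unfolding sum_partition_weight_complement[OF W(1) inj W(2) card] W(3) by (simp only: mult_ac)
  also have "\<dots> = A_nr hbar mu (N - l) (-1) k (\<lambda>q'. K_hat hbar mu N l p q') q"
    unfolding sign W_def w_def by (rule A_nr_K_hat_q[OF hm assms(8), symmetric])
  finally show ?thesis .
qed

end
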